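(* Let $G=G_1\ast_C G_2$ be an amalgamated free product over an infinite cyclic subgroup $C$. If $G_2$ is abelian, assume furthermore that $G_2=K\oplus L$ with $C\leqslant K$ and $|L|>2$. Then $G$ has a nontrivial automorphism whose restriction to $G_1$ is the identity. *)

theory Defs
  imports "HOL-Algebra.Algebra"
begin

text \<open>G is (internally) the amalgamated free product of its subgroups G1 and G2 over
  C = G1 \<inter> G2: G is generated by G1 \<union> G2, and every pair of homomorphisms
  from G1 and G2 into a group H that agree on C extends to a homomorphism G \<rightarrow> H
  (the pushout universal property; uniqueness of the extension follows from generation).
  Target groups H range over groups whose carrier lies in the element type of G.\<close>
definition amalgamated_free_product ::
  "('a, 'b) monoid_scheme \<Rightarrow> 'a set \<Rightarrow> 'a set \<Rightarrow> 'a set \<Rightarrow> bool" where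
  "amalgamated_free_product G G1 G2 C \<longleftrightarrow>
     group G \<and> subgroup G1 G \<and> subgroup G2 G \<and> G1 \<inter> G2 = C \<and>
     generate G (G1 \<union> G2) = carrier G \<and>
     (\<forall>(H :: 'a monoid) h1 h2.
        group H \<and> h1 \<in> hom (G\<lparr>carrier := G1\<rparr>) H \<and> h2 \<in> hom (G\<lparr>carrier := G2\<rparr>) H \<and>
        (\<forall>c\<in>C. h1 c = h2 c) \<longrightarrow>
        (\<exists>h \<in> hom G H. (\<forall>x\<in>G1. h x = h1 x) \<and> (\<forall>x\<in>G2. h x = h2 x)))"

definition infinite_cyclic_subgroup :: "('a, 'b) monoid_scheme \<Rightarrow> 'a set \<Rightarrow> bool" where
  "infinite_cyclic_subgroup G C \<longleftrightarrow>
     subgroup C G \<and> infinite C \<and> (\<exists>c\<in>C. C = generate G {c})"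

definition internal_direct_sum :: "('a, 'b) monoid_scheme \<Rightarrow> 'a set \<Rightarrow> 'a set \<Rightarrow> 'a set \<Rightarrow> bool" where
  "internal_direct_sum G A K L \<longleftrightarrow>
     subgroup K G \<and> subgroup L G \<and> K \<subseteq> A \<and> L \<subseteq> A \<and>
     K \<inter> L = {\<one>\<^bsub>G\<^esub>} \<and> K <#>\<^bsub>G\<^esub> L = A"

end

theory Submission
  imports Defs
begin

text \<open>
  An automorphism of \<open>G\<^sub>2\<close> fixing \<open>C\<close> pointwise extends, by the pushout property, to an
  automorphism of \<open>G\<close> fixing \<open>G\<^sub>1\<close>; so it suffices to find a nontrivial one. If some element
  of \<open>G\<^sub>2\<close> centralises \<open>C\<close> without being central in \<open>G\<^sub>2\<close>, conjugation by it will do.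
  Otherwise, \<open>C\<close> being abelian, \<open>G\<^sub>2\<close> is abelian, \<open>G\<^sub>2 = K \<oplus> L\<close> with \<open>C \<le> K\<close>, and we act on \<open>L\<close> only:
  by inversion if \<open>L\<close> has an element of order greater than 2. Otherwise \<open>L\<close> is an elementary
  abelian 2-group with at least four elements; take \<open>a \<noteq> 1\<close> in \<open>L\<close>, a subgroup \<open>M \<supseteq> K\<close> of
  index 2 avoiding \<open>a\<close> (Zorn), and an involution \<open>m \<noteq> 1\<close> in \<open>M \<inter> L\<close>; then fixing \<open>M\<close> and
  multiplying the other coset by \<open>m\<close> is an automorphism moving \<open>a\<close>.
\<close>

lemma hom_inverse_imp_iso:
  assumes f: "f \<in> hom G H" and g: "g ` carrier H \<subseteq> carrier G"
    and gf: "\<forall>x\<in>carrier G. g (f x) = x" and fg: "\<forall>y\<in>carrier H. f (g y) = y"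
  shows "f \<in> iso G H"
proof -
  have "f ` carrier G \<subseteq> carrier H" using f by (auto simp: hom_def)
  then have "bij_betw f (carrier G) (carrier H)"
    using g gf fg by (intro bij_betw_byWitness[where f' = g]) auto
  then show ?thesis using f by (simp add: iso_def)
qed

lemma (in group) hom_eq_on_generate:
  assumes H: "group H" and f: "f \<in> hom G H" and g: "g \<in> hom G H"
    and S: "S \<subseteq> carrier G" and agree: "\<forall>x\<in>S. f x = g x"
    and x: "x \<in> generate G S"
  shows "f x = g x"
proof -
  interpret f: group_hom G H f using H f by (simp add: group_hom_def group_hom_axioms_def)
  interpret g: group_hom G H g using H g by (simp add: group_hom_def group_hom_axioms_def)
  from x show ?thesis
  proof induction
    case one then show ?case by simp
  next
    case (incl h) then show ?case using agree by simp
  next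
    case (inv h) then show ?case using agree S by (auto simp: f.hom_inv g.hom_inv)
  next
    case (eng h1 h2)
    then have "h1 \<in> carrier G" "h2 \<in> carrier G" using generate_in_carrier S by auto
    then show ?case using eng.IH by simp
  qed
qed

lemma (in group) inner_automorphism_iso:
  assumes g: "g \<in> carrier G"
  shows "(\<lambda>x. g \<otimes> x \<otimes> inv g) \<in> iso G G"
proof (rule hom_inverse_imp_iso[where g = "\<lambda>x. inv g \<otimes> x \<otimes> g"])
  show "(\<lambda>x. g \<otimes> x \<otimes> inv g) \<in> hom G G"
    using g by (auto simp: hom_def m_assoc) (simp add: m_assoc[symmetric])
  show "\<forall>x\<in>carrier G. inv g \<otimes> (g \<otimes> x \<otimes> inv g) \<otimes> g = x"
    using g conjugation_is_surj[of "inv g"] by simp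
  show "\<forall>y\<in>carrier G. g \<otimes> (inv g \<otimes> y \<otimes> g) \<otimes> inv g = y"
    using g conjugation_is_surj by simp
qed (use g in auto)

lemma (in group) nontrivial_inner_automorphism_fixing:
  assumes C: "C \<subseteq> carrier G" and g: "g \<in> carrier G" and gC: "\<forall>c\<in>C. g \<otimes> c = c \<otimes> g"
    and x: "x \<in> carrier G" and gx: "g \<otimes> x \<noteq> x \<otimes> g"
  shows "\<exists>\<psi>\<in>iso G G. (\<forall>c\<in>C. \<psi> c = c) \<and> (\<exists>x\<in>carrier G. \<psi> x \<noteq> x)"
proof (intro bexI[of _ "\<lambda>x. g \<otimes> x \<otimes> inv g"] conjI)
  show "\<forall>c\<in>C. g \<otimes> c \<otimes> inv g = c" using C g gC by (auto simp: m_assoc)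
  show "\<exists>x\<in>carrier G. g \<otimes> x \<otimes> inv g \<noteq> x"
  proof (intro bexI[OF _ x] notI)
    assume "g \<otimes> x \<otimes> inv g = x"
    then have "g \<otimes> x \<otimes> inv g \<otimes> g = x \<otimes> g" by simp
    then show False using gx g x by (simp add: m_assoc)
  qed
qed (rule inner_automorphism_iso[OF g])

lemma (in group) generate_singleton_commute:
  assumes c: "c \<in> carrier G" and a: "a \<in> generate G {c}" and b: "b \<in> generate G {c}"
  shows "a \<otimes> b = b \<otimes> a"
proof -
  obtain i j :: int where "a = c [^] i" "b = c [^] j"
    using a b generate_pow[OF c] by blast
  then show ?thesis using c by (simp add: int_pow_mult[symmetric] add.commute)
qed

lemma (in group) comm_group_if_centralizer_central:
  assumes A: "subgroup A G" and CA: "C \<subseteq> A" and Ccomm: "\<forall>a\<in>C. \<forall>b\<in>C. a \<otimes> b = b \<otimes> a"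
    and central: "\<forall>g\<in>A. (\<forall>c\<in>C. g \<otimes> c = c \<otimes> g) \<longrightarrow> (\<forall>x\<in>A. g \<otimes> x = x \<otimes> g)"
  shows "comm_group (G\<lparr>carrier := A\<rparr>)"
proof -
  have "\<forall>c\<in>C. \<forall>x\<in>A. c \<otimes> x = x \<otimes> c" using central CA Ccomm by blast
  then have "\<forall>x\<in>A. \<forall>y\<in>A. x \<otimes> y = y \<otimes> x" using central by metis
  interpret A: group "G\<lparr>carrier := A\<rparr>" by (rule subgroup_imp_group[OF A])
  show ?thesis by (rule A.group_comm_groupI) (simp add: \<open>\<forall>x\<in>A. \<forall>y\<in>A. x \<otimes> y = y \<otimes> x\<close>)
qed

lemma (in group) direct_decomposition_unique:
  assumes K: "subgroup K G" and L: "subgroup L G" and KL: "K \<inter> L = {\<one>}"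
    and k: "k \<in> K" "k' \<in> K" and l: "l \<in> L" "l' \<in> L" and eq: "k \<otimes> l = k' \<otimes> l'"
  shows "k = k' \<and> l = l'"
proof -
  have carr: "k \<in> carrier G" "k' \<in> carrier G" "l \<in> carrier G" "l' \<in> carrier G"
    using k l subgroup.mem_carrier[OF K] subgroup.mem_carrier[OF L] by auto
  have "inv k' \<otimes> k = inv k' \<otimes> (k \<otimes> l) \<otimes> inv l" using carr by (simp add: m_assoc)
  also have "\<dots> = l' \<otimes> inv l" using carr by (simp add: eq m_assoc[symmetric])
  finally have "inv k' \<otimes> k \<in> K \<inter> L"
    using k l by (metis IntI K L subgroup.m_closed subgroup.m_inv_closed)
  then have "inv k' \<otimes> k = \<one>" using KL by blast
  moreover have "k = k' \<otimes> (inv k' \<otimes> k)" using carr by (simp add: m_assoc[symmetric])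
  ultimately have "k = k'" using carr by simp
  then show ?thesis using eq carr by simp
qed

lemma (in comm_group) direct_sum_invert_factor_iso:
  assumes K: "subgroup K G" and L: "subgroup L G" and KL: "K \<inter> L = {\<one>}"
    and sum: "K <#> L = carrier G"
  shows "\<exists>\<psi>\<in>iso G G. \<forall>k\<in>K. \<forall>l\<in>L. \<psi> (k \<otimes> l) = k \<otimes> inv l"
proof
  define \<psi> where "\<psi> x = (THE y. \<exists>k\<in>K. \<exists>l\<in>L. x = k \<otimes> l \<and> y = k \<otimes> inv l)" for x
  show \<psi>: "\<forall>k\<in>K. \<forall>l\<in>L. \<psi> (k \<otimes> l) = k \<otimes> inv l"
    unfolding \<psi>_def using direct_decomposition_unique[OF K L KL]
    by (intro ballI the_equality) blast+
  have decomp: "\<exists>k\<in>K. \<exists>l\<in>L. x = k \<otimes> l" if "x \<in> carrier G" for x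
    using that unfolding sum[symmetric] set_mult_def by blast
  have carr: "k \<in> carrier G" "l \<in> carrier G" if "k \<in> K" "l \<in> L" for k l
    using that subgroup.mem_carrier[OF K] subgroup.mem_carrier[OF L] by auto
  have hom: "\<psi> \<in> hom G G"
  proof (rule homI)
    show "\<psi> x \<in> carrier G" if "x \<in> carrier G" for x
      using decomp[OF that] \<psi> carr by auto
    show "\<psi> (x \<otimes> y) = \<psi> x \<otimes> \<psi> y" if xy: "x \<in> carrier G" "y \<in> carrier G" for x y
    proof -
      obtain k l k' l' where kl: "k \<in> K" "l \<in> L" "k' \<in> K" "l' \<in> L"
        and xy: "x = k \<otimes> l" "y = k' \<otimes> l'"
        using decomp xy by meson
      have "x \<otimes> y = (k \<otimes> k') \<otimes> (l \<otimes> l')" using kl carr by (simp add: xy m_ac)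
      then have "\<psi> (x \<otimes> y) = (k \<otimes> k') \<otimes> inv (l \<otimes> l')"
        using \<psi> kl K L by (simp add: subgroup.m_closed)
      also have "\<dots> = \<psi> x \<otimes> \<psi> y" using \<psi> kl carr by (simp add: xy inv_mult m_ac)
      finally show ?thesis .
    qed
  qed
  have "\<psi> (\<psi> x) = x" if "x \<in> carrier G" for x
    using decomp[OF that] \<psi> carr L by (auto simp: subgroup.m_inv_closed)
  with hom show "\<psi> \<in> iso G G" by (intro hom_inverse_imp_iso[where g = \<psi>]) (auto simp: hom_def)
qed

lemma (in group) subgroup_Union_chain:
  assumes ne: "\<C> \<noteq> {}" and sub: "\<forall>N\<in>\<C>. subgroup N G" and ch: "chain\<^sub>\<subseteq> \<C>"
  shows "subgroup (\<Union>\<C>) G"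
proof (rule subgroup.intro)
  show "x \<otimes> y \<in> \<Union>\<C>" if xy: "x \<in> \<Union>\<C>" "y \<in> \<Union>\<C>" for x y
  proof -
    obtain N N' where N: "N \<in> \<C>" "N' \<in> \<C>" and "x \<in> N" "y \<in> N'" using xy by blast
    moreover have "N \<subseteq> N' \<or> N' \<subseteq> N" using ch N unfolding chain_subset_def by blast
    ultimately have "x \<in> N \<and> y \<in> N \<or> x \<in> N' \<and> y \<in> N'" by blast
    then show ?thesis using N sub subgroup.m_closed by (metis UnionI)
  qed
  show "\<Union>\<C> \<subseteq> carrier G" using sub subgroup.subset by blast
  show "\<one> \<in> \<Union>\<C>" using ne sub subgroup.one_closed by blast
  show "inv x \<in> \<Union>\<C>" if x: "x \<in> \<Union>\<C>" for x
  proof -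
    obtain N where "N \<in> \<C>" "x \<in> N" using x by blast
    then show ?thesis using sub subgroup.m_inv_closed by (metis UnionI)
  qed
qed

lemma (in comm_group) subgroup_Un_r_coset:
  assumes M: "subgroup M G" and x: "x \<in> carrier G" and xx: "x \<otimes> x \<in> M"
  shows "subgroup (M \<union> (M #> x)) G"
proof -
  have carr: "m \<in> carrier G" if "m \<in> M" for m using that subgroup.mem_carrier[OF M] by blast
  note closed = subgroup.m_closed[OF M] subgroup.m_inv_closed[OF M]
  show ?thesis
  proof (rule subgroup.intro)
    show "M \<union> (M #> x) \<subseteq> carrier G" using carr x by (auto simp: r_coset_def)
    show "\<one> \<in> M \<union> (M #> x)" using subgroup.one_closed[OF M] by blast
    show "u \<otimes> v \<in> M \<union> (M #> x)" if uv: "u \<in> M \<union> (M #> x)" "v \<in> M \<union> (M #> x)" for u v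
    proof -
      have coset: "m \<otimes> x \<in> M #> x" if "m \<in> M" for m
        using that subgroup.subset[OF M] x by (rule rcosI)
      consider "u \<in> M" "v \<in> M" | m where "u \<in> M" "m \<in> M" "v = m \<otimes> x"
        | m where "m \<in> M" "u = m \<otimes> x" "v \<in> M"
        | m m' where "m \<in> M" "m' \<in> M" "u = m \<otimes> x" "v = m' \<otimes> x"
        using uv unfolding r_coset_def by blast
      then show ?thesis
      proof cases
        case 1 then show ?thesis using closed(1) by simp
      next
        case (2 m)
        then have "u \<otimes> v = (u \<otimes> m) \<otimes> x" using carr x by (simp add: m_assoc)
        then show ?thesis using 2 closed(1) coset by simp
      next
        case (3 m)
        then have "u \<otimes> v = (m \<otimes> v) \<otimes> x" using carr x by (simp add: m_ac)
        then show ?thesis using 3 closed(1) coset by simp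
      next
        case (4 m m')
        then have "u \<otimes> v = m \<otimes> m' \<otimes> (x \<otimes> x)" using carr x by (simp add: m_ac)
        then show ?thesis using 4 closed(1) xx by simp
      qed
    qed
    show "inv u \<in> M \<union> (M #> x)" if "u \<in> M \<union> (M #> x)" for u
    proof -
      have "inv (x \<otimes> x) \<otimes> x = inv x" using x by (simp add: inv_mult m_assoc)
      then have "inv (m \<otimes> x) = (inv m \<otimes> inv (x \<otimes> x)) \<otimes> x" if "m \<in> M" for m
        using that carr x by (simp add: inv_mult m_assoc)
      then show ?thesis using that closed xx by (auto simp: r_coset_def)
    qed
  qed
qed

lemma (in comm_group) index_two_subgroup_avoiding:
  assumes K: "subgroup K G" and a: "a \<in> carrier G" "a \<notin> K"
    and squares: "\<forall>x\<in>carrier G. x \<otimes> x \<in> K"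
  obtains M where "subgroup M G" "K \<subseteq> M" "a \<notin> M"
    "\<forall>x\<in>carrier G - M. \<forall>y\<in>carrier G - M. x \<otimes> y \<in> M"
proof -
  define \<A> where "\<A> = {N. subgroup N G \<and> K \<subseteq> N \<and> a \<notin> N}"
  have "\<exists>M\<in>\<A>. \<forall>N\<in>\<A>. M \<subseteq> N \<longrightarrow> N = M"
  proof (rule subset_Zorn_nonempty)
    show "\<A> \<noteq> {}" using K a unfolding \<A>_def by blast
    show "\<Union>\<C> \<in> \<A>" if ne: "\<C> \<noteq> {}" and ch: "subset.chain \<A> \<C>" for \<C>
    proof -
      have sub: "\<C> \<subseteq> \<A>" and "chain\<^sub>\<subseteq> \<C>"
        using ch by (auto simp: subset_chain_def chain_subset_def)
      then have "subgroup (\<Union>\<C>) G" using subgroup_Union_chain[OF ne] unfolding \<A>_def by blast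
      then show ?thesis using sub ne unfolding \<A>_def by blast
    qed
  qed
  then obtain M where "M \<in> \<A>" and max: "\<And>N. N \<in> \<A> \<Longrightarrow> M \<subseteq> N \<Longrightarrow> N = M" by blast
  then have M: "subgroup M G" "K \<subseteq> M" "a \<notin> M" unfolding \<A>_def by auto
  have carr: "m \<in> carrier G" if "m \<in> M" for m using that subgroup.mem_carrier[OF M(1)] by blast
  note closed = subgroup.m_closed[OF M(1)] subgroup.m_inv_closed[OF M(1)]
  \<comment> \<open>By maximality: \<open>M \<union> M x\<close> is a subgroup strictly above \<open>M\<close>, so it must contain \<open>a\<close>.\<close>
  have times_a: "x \<otimes> a \<in> M" if x: "x \<in> carrier G" "x \<notin> M" for x
  proof -
    have "x \<otimes> x \<in> M" using squares x M by blast
    then have sub: "subgroup (M \<union> (M #> x)) G" using subgroup_Un_r_coset M x by blast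
    have "x \<in> M #> x" using x subgroup.one_closed[OF M(1)] by (force simp: r_coset_def)
    then have "a \<in> M \<union> (M #> x)" using max[of "M \<union> (M #> x)"] sub M x unfolding \<A>_def by blast
    then obtain m where m: "m \<in> M" "a = m \<otimes> x" using M by (auto simp: r_coset_def)
    then have "x \<otimes> a = m \<otimes> (x \<otimes> x)" using x carr by (simp add: m_ac)
    then show ?thesis using m \<open>x \<otimes> x \<in> M\<close> closed by simp
  qed
  have "x \<otimes> y \<in> M" if x: "x \<in> carrier G - M" and y: "y \<in> carrier G - M" for x y
  proof -
    have "(x \<otimes> a) \<otimes> (y \<otimes> a) = (x \<otimes> y) \<otimes> (a \<otimes> a)" using x y a by (simp add: m_ac)
    then have "x \<otimes> y = (x \<otimes> a) \<otimes> (y \<otimes> a) \<otimes> inv (a \<otimes> a)" using x y a by (simp add: m_assoc)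
    moreover have "a \<otimes> a \<in> M" using times_a a M by blast
    ultimately show ?thesis using times_a x y closed by simp
  qed
  then show ?thesis using that M by blast
qed

lemma (in comm_group) index_two_twist_iso:
  assumes M: "subgroup M G" and index_two: "\<forall>x\<in>carrier G - M. \<forall>y\<in>carrier G - M. x \<otimes> y \<in> M"
    and m: "m \<in> M" and mm: "m \<otimes> m = \<one>"
  shows "(\<lambda>x. if x \<in> M then x else x \<otimes> m) \<in> iso G G"
proof -
  define \<psi> where "\<psi> x = (if x \<in> M then x else x \<otimes> m)" for x
  have carr: "y \<in> carrier G" if "y \<in> M" for y using that subgroup.mem_carrier[OF M] by blast
  note closed = subgroup.m_closed[OF M] subgroup.m_inv_closed[OF M]
  have twist_out: "x \<otimes> m \<notin> M" if "x \<in> carrier G" "x \<notin> M" for x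
  proof
    assume "x \<otimes> m \<in> M"
    then have "x \<otimes> m \<otimes> m \<in> M" using m closed by blast
    then show False using that m carr mm by (simp add: m_assoc)
  qed
  have mixed_out: "y \<otimes> x \<notin> M" if "y \<in> M" "x \<in> carrier G" "x \<notin> M" for x y
  proof
    assume "y \<otimes> x \<in> M"
    then have "inv y \<otimes> (y \<otimes> x) \<in> M" using that closed by blast
    then show False using that carr by (simp add: m_assoc[symmetric])
  qed
  have hom: "\<psi> \<in> hom G G"
  proof (rule homI)
    show "\<psi> x \<in> carrier G" if "x \<in> carrier G" for x using that m carr by (simp add: \<psi>_def)
    show "\<psi> (x \<otimes> y) = \<psi> x \<otimes> \<psi> y" if x: "x \<in> carrier G" and y: "y \<in> carrier G" for x y
    proof (cases "x \<in> M"; cases "y \<in> M")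
      assume "x \<in> M" "y \<in> M"
      then show ?thesis using closed by (simp add: \<psi>_def)
    next
      assume "x \<in> M" "y \<notin> M"
      then show ?thesis using mixed_out x y m carr by (simp add: \<psi>_def m_assoc)
    next
      assume "x \<notin> M" "y \<in> M"
      then show ?thesis using mixed_out[of y x] x y m carr by (simp add: \<psi>_def m_ac)
    next
      assume "x \<notin> M" "y \<notin> M"
      moreover have "x \<otimes> m \<otimes> (y \<otimes> m) = x \<otimes> y \<otimes> (m \<otimes> m)" using x y m carr by (simp add: m_ac)
      ultimately show ?thesis using index_two x y mm by (simp add: \<psi>_def)
    qed
  qed
  have "\<psi> (\<psi> x) = x" if "x \<in> carrier G" for x
    using that twist_out m carr mm by (simp add: \<psi>_def m_assoc)
  with hom have "\<psi> \<in> iso G G" by (intro hom_inverse_imp_iso[where g = \<psi>]) (auto simp: hom_def)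
  then show ?thesis by (simp add: \<psi>_def[abs_def])
qed

lemma (in comm_group) elementary_direct_sum_nontrivial_automorphism:
  assumes K: "subgroup K G" and L: "subgroup L G" and KL: "K \<inter> L = {\<one>}"
    and sum: "K <#> L = carrier G" and involutions: "\<forall>l\<in>L. l \<otimes> l = \<one>"
    and a: "a \<in> L" "a \<noteq> \<one>" and b: "b \<in> L" "b \<noteq> \<one>" "b \<noteq> a"
  shows "\<exists>\<psi>\<in>iso G G. (\<forall>k\<in>K. \<psi> k = k) \<and> (\<exists>x\<in>carrier G. \<psi> x \<noteq> x)"
proof -
  have carrK: "k \<in> carrier G" if "k \<in> K" for k using that subgroup.mem_carrier[OF K] by blast
  have carrL: "l \<in> carrier G" if "l \<in> L" for l using that subgroup.mem_carrier[OF L] by blast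
  have "x \<otimes> x \<in> K" if x: "x \<in> carrier G" for x
  proof -
    obtain k l where kl: "k \<in> K" "l \<in> L" "x = k \<otimes> l"
      using x unfolding sum[symmetric] set_mult_def by blast
    then have "x \<otimes> x = (k \<otimes> k) \<otimes> (l \<otimes> l)" using carrK carrL by (simp add: m_ac)
    then show ?thesis using kl involutions carrK subgroup.m_closed[OF K] by simp
  qed
  moreover have "a \<notin> K" using a KL by blast
  ultimately obtain M where M: "subgroup M G" "K \<subseteq> M" "a \<notin> M"
    and index_two: "\<forall>x\<in>carrier G - M. \<forall>y\<in>carrier G - M. x \<otimes> y \<in> M"
    using index_two_subgroup_avoiding[OF K carrL[OF a(1)]] by blast
  have "\<exists>m\<in>M \<inter> L. m \<noteq> \<one>"
  proof (cases "b \<in> M")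
    case False
    then have "b \<otimes> a \<in> M \<inter> L" using index_two a b M carrL subgroup.m_closed[OF L] by blast
    moreover have "b \<otimes> a \<noteq> \<one>"
    proof
      assume "b \<otimes> a = \<one>"
      then have "b = inv a" using a b carrL by (simp add: inv_equality[symmetric])
      then show False using a b carrL involutions by (simp add: inv_equality)
    qed
    ultimately show ?thesis by blast
  qed (use b in blast)
  then obtain m where m: "m \<in> M" "m \<in> L" "m \<noteq> \<one>" by blast
  let ?\<psi> = "\<lambda>x. if x \<in> M then x else x \<otimes> m"
  have "?\<psi> \<in> iso G G" using index_two_twist_iso[OF M(1) index_two m(1)] m involutions by blast
  moreover have "\<forall>k\<in>K. ?\<psi> k = k" using M by auto
  moreover have "?\<psi> a \<noteq> a" using M a m carrL by auto
  ultimately show ?thesis using carrL[OF a(1)] by (intro bexI[of _ ?\<psi>]) blast+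
qed

lemma (in comm_group) direct_sum_nontrivial_automorphism:
  assumes K: "subgroup K G" and L: "subgroup L G" and KL: "K \<inter> L = {\<one>}"
    and sum: "K <#> L = carrier G" and big: "infinite L \<or> card L > 2"
  shows "\<exists>\<psi>\<in>iso G G. (\<forall>k\<in>K. \<psi> k = k) \<and> (\<exists>x\<in>carrier G. \<psi> x \<noteq> x)"
proof (cases "\<forall>l\<in>L. l \<otimes> l = \<one>")
  case True
  have not_two: "\<not> L \<subseteq> {u, v}" for u v
  proof
    assume sub: "L \<subseteq> {u, v}"
    then have "finite L" "card L \<le> card {u, v}" by (auto intro: finite_subset card_mono)
    moreover have "card {u, v} \<le> 2" by (cases "u = v") auto
    ultimately show False using big by linarith
  qed
  obtain a b where "a \<in> L" "a \<noteq> \<one>" "b \<in> L" "b \<noteq> \<one>" "b \<noteq> a"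
    using not_two[of "\<one>" "\<one>"] not_two[of "\<one>"] by blast
  then show ?thesis using elementary_direct_sum_nontrivial_automorphism[OF K L KL sum True] by blast
next
  case False
  then obtain l where l: "l \<in> L" "l \<otimes> l \<noteq> \<one>" by blast
  obtain \<psi> where \<psi>: "\<psi> \<in> iso G G" "\<forall>k\<in>K. \<forall>l\<in>L. \<psi> (k \<otimes> l) = k \<otimes> inv l"
    using direct_sum_invert_factor_iso[OF K L KL sum] by blast
  have one: "\<one> \<in> K" "\<one> \<in> L" using K L subgroup.one_closed by blast+
  have carr: "k \<in> carrier G" if "k \<in> K" for k using that subgroup.mem_carrier[OF K] by blast
  have "l \<in> carrier G" using l subgroup.mem_carrier[OF L] by blast
  then have "\<psi> l = inv l" using \<psi>(2) one l by (metis l_one inv_closed)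
  moreover have "inv l \<noteq> l"
  proof
    assume "inv l = l"
    then have "l \<otimes> l = inv l \<otimes> l" by simp
    then show False using l \<open>l \<in> carrier G\<close> by simp
  qed
  moreover have "\<psi> k = k" if "k \<in> K" for k
    using \<psi>(2) one that carr[OF that] by (metis inv_one r_one)
  ultimately show ?thesis using \<psi>(1) \<open>l \<in> carrier G\<close> by metis
qed

lemma (in group) internal_direct_sum_in_subgroup:
  assumes "subgroup A G" and "internal_direct_sum G A K L"
  shows "subgroup K (G\<lparr>carrier := A\<rparr>)" "subgroup L (G\<lparr>carrier := A\<rparr>)"
    "K \<inter> L = {\<one>\<^bsub>G\<lparr>carrier := A\<rparr>\<^esub>}" "K <#>\<^bsub>G\<lparr>carrier := A\<rparr>\<^esub> L = carrier (G\<lparr>carrier := A\<rparr>)"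
  using assms subgroup_incl unfolding internal_direct_sum_def by (auto simp: set_mult_def)

lemma (in group) nontrivial_automorphism_fixing_abelian_subgroup:
  assumes A: "subgroup A G" and CA: "C \<subseteq> A" and Ccomm: "\<forall>a\<in>C. \<forall>b\<in>C. a \<otimes> b = b \<otimes> a"
    and split: "comm_group (G\<lparr>carrier := A\<rparr>) \<Longrightarrow>
      \<exists>K L. internal_direct_sum G A K L \<and> C \<subseteq> K \<and> (infinite L \<or> card L > 2)"
  shows "\<exists>\<psi>\<in>iso (G\<lparr>carrier := A\<rparr>) (G\<lparr>carrier := A\<rparr>). (\<forall>c\<in>C. \<psi> c = c) \<and> (\<exists>x\<in>A. \<psi> x \<noteq> x)"
proof (cases "\<forall>g\<in>A. (\<forall>c\<in>C. g \<otimes> c = c \<otimes> g) \<longrightarrow> (\<forall>x\<in>A. g \<otimes> x = x \<otimes> g)")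
  case True
  then have "comm_group (G\<lparr>carrier := A\<rparr>)" by (rule comm_group_if_centralizer_central[OF A CA Ccomm])
  then interpret A: comm_group "G\<lparr>carrier := A\<rparr>" .
  obtain K L where KL: "internal_direct_sum G A K L" and "C \<subseteq> K" and "infinite L \<or> card L > 2"
    using split A.comm_group_axioms by blast
  then obtain \<psi> where "\<psi> \<in> iso (G\<lparr>carrier := A\<rparr>) (G\<lparr>carrier := A\<rparr>)" "\<forall>k\<in>K. \<psi> k = k"
    "\<exists>x\<in>A. \<psi> x \<noteq> x"
    using A.direct_sum_nontrivial_automorphism[OF internal_direct_sum_in_subgroup[OF A KL]] by auto
  then show ?thesis using \<open>C \<subseteq> K\<close> by blast
next
  case False
  then obtain g x where "g \<in> A" "\<forall>c\<in>C. g \<otimes> c = c \<otimes> g" "x \<in> A" "g \<otimes> x \<noteq> x \<otimes> g"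
    by blast
  then show ?thesis
    using group.nontrivial_inner_automorphism_fixing[OF subgroup_imp_group[OF A], of C g x] CA by simp
qed

lemma amalgamated_free_product_extend_automorphism:
  assumes afp: "amalgamated_free_product G G1 G2 C"
    and \<psi>: "\<psi> \<in> iso (G\<lparr>carrier := G2\<rparr>) (G\<lparr>carrier := G2\<rparr>)" and fixes_C: "\<forall>c\<in>C. \<psi> c = c"
  shows "\<exists>\<phi>\<in>iso G G. (\<forall>x\<in>G1. \<phi> x = x) \<and> (\<forall>x\<in>G2. \<phi> x = \<psi> x)"
proof -
  have G: "group G" and G1: "subgroup G1 G" and G2: "subgroup G2 G" and C: "G1 \<inter> G2 = C"
    and gen: "generate G (G1 \<union> G2) = carrier G"
    and pushout: "\<And>(H :: 'a monoid) h1 h2. group H \<Longrightarrow> h1 \<in> hom (G\<lparr>carrier := G1\<rparr>) H \<Longrightarrow>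
        h2 \<in> hom (G\<lparr>carrier := G2\<rparr>) H \<Longrightarrow> (\<forall>c\<in>C. h1 c = h2 c) \<Longrightarrow>
        (\<exists>h \<in> hom G H. (\<forall>x\<in>G1. h x = h1 x) \<and> (\<forall>x\<in>G2. h x = h2 x))"
    using afp unfolding amalgamated_free_product_def by blast+
  interpret group G by fact
  interpret H: group "G\<lparr>carrier := G2\<rparr>" by (rule subgroup_imp_group[OF G2])
  have sub: "G1 \<union> G2 \<subseteq> carrier G" using G1 G2 subgroup.subset by blast
  \<comment> \<open>The pushout property only speaks about targets of type \<open>'a monoid\<close>;
    \<open>units_of G\<close> is \<open>G\<close> stripped of its extra record fields.\<close>
  have hom_units: "hom A (units_of G) = hom A G" for A :: "('a, 'c) monoid_scheme"
    by (simp add: hom_def units_of_def)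
  have extend: "\<exists>\<phi>\<in>hom G G. (\<forall>x\<in>G1. \<phi> x = x) \<and> (\<forall>x\<in>G2. \<phi> x = \<chi> x)"
    if "\<chi> \<in> iso (G\<lparr>carrier := G2\<rparr>) (G\<lparr>carrier := G2\<rparr>)" "\<forall>c\<in>C. \<chi> c = c" for \<chi>
  proof -
    have "(\<lambda>x. x) \<in> hom (G\<lparr>carrier := G1\<rparr>) (units_of G)" "\<chi> \<in> hom (G\<lparr>carrier := G2\<rparr>) (units_of G)"
      using that(1) G1 G2 subgroup.subset unfolding hom_units by (fastforce simp: hom_def iso_def)+
    then show ?thesis using pushout[OF units_group] that(2) C hom_units by (metis IntI)
  qed
  define \<psi>' where "\<psi>' = inv_into G2 \<psi>"
  have \<psi>': "\<psi>' \<in> iso (G\<lparr>carrier := G2\<rparr>) (G\<lparr>carrier := G2\<rparr>)"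
    unfolding \<psi>'_def using H.iso_set_sym[OF \<psi>] by simp
  have bij: "bij_betw \<psi> G2 G2" using \<psi> by (simp add: iso_def)
  have \<psi>'_\<psi>: "\<psi>' (\<psi> x) = x" "\<psi> (\<psi>' x) = x" if "x \<in> G2" for x
    using that bij unfolding \<psi>'_def by (auto simp: bij_betw_def bij_betw_inv_into_right)
  have "\<forall>c\<in>C. \<psi>' c = c" using fixes_C C \<psi>'_\<psi> by (metis IntE)
  obtain \<phi> \<phi>' where \<phi>: "\<phi> \<in> hom G G" "\<forall>x\<in>G1. \<phi> x = x" "\<forall>x\<in>G2. \<phi> x = \<psi> x"
    and \<phi>': "\<phi>' \<in> hom G G" "\<forall>x\<in>G1. \<phi>' x = x" "\<forall>x\<in>G2. \<phi>' x = \<psi>' x"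
    using extend[OF \<psi> fixes_C] extend[OF \<psi>' \<open>\<forall>c\<in>C. \<psi>' c = c\<close>] by blast
  have "\<psi> ` G2 \<subseteq> G2" "\<psi>' ` G2 \<subseteq> G2" using \<psi> \<psi>' by (auto simp: iso_def hom_def)
  then have on_factors: "\<forall>x\<in>G1 \<union> G2. \<phi>' (\<phi> x) = x" "\<forall>x\<in>G1 \<union> G2. \<phi> (\<phi>' x) = x"
    using \<phi> \<phi>' \<psi>'_\<psi> by auto
  have left_inverse: "\<chi>' (\<chi> x) = x"
    if "\<chi> \<in> hom G G" "\<chi>' \<in> hom G G" "\<forall>y\<in>G1 \<union> G2. \<chi>' (\<chi> y) = y" "x \<in> carrier G"
    for \<chi> \<chi>' x
  proof -
    have "\<forall>y\<in>G1 \<union> G2. compose (carrier G) \<chi>' \<chi> y = y" using that(3) sub by (auto simp: compose_eq)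
    moreover have "(\<lambda>y. y) \<in> hom G G" by (simp add: hom_def)
    ultimately have "compose (carrier G) \<chi>' \<chi> x = x"
      using hom_eq_on_generate[OF is_group hom_compose[OF that(1,2)] _ sub] that(4) gen by blast
    then show ?thesis using that(4) by (simp add: compose_eq)
  qed
  have "\<phi> \<in> iso G G"
    using \<phi>(1) \<phi>'(1) left_inverse[OF \<phi>(1) \<phi>'(1) on_factors(1)] left_inverse[OF \<phi>'(1) \<phi>(1) on_factors(2)] by (intro hom_inverse_imp_iso[where g = \<phi>']) (auto simp: hom_def)
  then show ?thesis using \<phi> by blast
qed

theorem lemma4p3:
  fixes G :: "('a, 'b) monoid_scheme" and G1 G2 C :: "'a set"
  assumes "amalgamated_free_product G G1 G2 C"
    and "infinite_cyclic_subgroup G C"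
    and "comm_group (G\<lparr>carrier := G2\<rparr>) \<Longrightarrow>
           \<exists>K L. internal_direct_sum G G2 K L \<and> C \<subseteq> K \<and> (infinite L \<or> card L > 2)"
  shows "\<exists>\<phi>. \<phi> \<in> iso G G \<and> (\<forall>x\<in>G1. \<phi> x = x) \<and> (\<exists>x\<in>carrier G. \<phi> x \<noteq> x)"
proof -
  have G: "group G" and G2: "subgroup G2 G" and C: "C \<subseteq> G2"
    using assms(1) unfolding amalgamated_free_product_def by blast+
  interpret group G by fact
  obtain c where c: "c \<in> C" and C_gen: "C = generate G {c}"
    using assms(2) unfolding infinite_cyclic_subgroup_def by blast
  have "c \<in> carrier G" using c C subgroup.mem_carrier[OF G2] by blast
  then have "\<forall>a\<in>C. \<forall>b\<in>C. a \<otimes>\<^bsub>G\<^esub> b = b \<otimes>\<^bsub>G\<^esub> a"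
    unfolding C_gen by (blast intro: generate_singleton_commute)
  then obtain \<psi> x where \<psi>: "\<psi> \<in> iso (G\<lparr>carrier := G2\<rparr>) (G\<lparr>carrier := G2\<rparr>)" "\<forall>c\<in>C. \<psi> c = c"
    and x: "x \<in> G2" "\<psi> x \<noteq> x"
    using nontrivial_automorphism_fixing_abelian_subgroup[OF G2 C _ assms(3)] by blast
  obtain \<phi> where \<phi>: "\<phi> \<in> iso G G" "\<forall>y\<in>G1. \<phi> y = y" "\<forall>y\<in>G2. \<phi> y = \<psi> y"
    using amalgamated_free_product_extend_automorphism[OF assms(1) \<psi>] by blast
  moreover have "x \<in> carrier G" "\<phi> x \<noteq> x" using \<phi>(3) x subgroup.mem_carrier[OF G2] by auto
  ultimately show ?thesis by blast
qed

end
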